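(* Let $\mathcal{A}$ be a primal algebra and let $<$ be a linear order on its universe $A$. Then $\mathbf{OV}_{\mathit{fin}}(\mathcal{A},<)$ is a reasonable order expansion of $\mathbf{V}_{\mathit{fin}}(\mathcal{A})$.
   Context: A primal algebra is a finite algebra with at least two elements in which every finitary operation on its universe is a term operation. $\mathbf{V}_{\mathit{fin}}(\mathcal{A})$ is the category whose objects are the finite algebras in the variety generated by $\mathcal{A}$ and whose morphisms are embeddings. For a linear order $<$ on $A$ and a positive integer $n$, the antilexicographic order $\sqsubset$ on $A^n$ is: $(x_1,\dots,x_n)\sqsubset(y_1,\dots,y_n)$ iff there is $s$ with $x_t=y_t$ for all $t>s$ and $x_s<y_s$. For a permutation $\pi$ of $\{1,\dots,n\}$, $\bar x\sqsubset_\pi\bar y$ iff $(x_{\pi(1)},\dots,x_{\pi(n)})\sqsubset(y_{\pi(1)},\dots,y_{\pi(n)})$; $\sqsubseteq_\pi$ is its reflexive version and $\mathcal{A}^n_{\sqsubseteq_\pi}$ is the power algebra $\mathcal{A}^n$ expanded by $\sqsubseteq_\pi$. $\mathbf{OV}_{\mathit{fin}}(\mathcal{A},<)$ is the category whose objects are all structures isomorphic to some $\mathcal{A}^n_{\sqsubseteq_\pi}$ and whose morphisms are embeddings. If $\mathbf{C}$ is a category of finite structures with embeddings and $\mathbf{C}^*$ a category of finite ordered structures with embeddings, $\mathbf{C}^*$ is an order expansion of $\mathbf{C}$ if for every object $(A,\Delta,<)$ of $\mathbf{C}^*$ the reduct $(A,\Delta)$ is an object of $\mathbf{C}$ and the forgetful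 functor $U:\mathbf{C}^*\to\mathbf{C}$ (dropping the order, identity on maps) is surjective on objects; it is reasonable if for all objects $\mathcal{A},\mathcal{B}$ of $\mathbf{C}$, every embedding $f:\mathcal{A}\to\mathcal{B}$ and every object $\mathcal{A}_<$ of $\mathbf{C}^*$ with $U(\mathcal{A}_<)=\mathcal{A}$ there is an object $\mathcal{B}_\sqsubset$ of $\mathbf{C}^*$ with $U(\mathcal{B}_\sqsubset)=\mathcal{B}$ and $f$ an embedding of $\mathcal{A}_<$ into $\mathcal{B}_\sqsubset$. *)

theory Defs
  imports Main
begin

text \<open>A signature is an arity function ar :: 'f => nat.  An algebra is a pair
  (carrier, ops) where ops g is applied to argument lists of length ar g.\<close>

type_synonym ('a,'f) alg = "'a set \<times> ('f \<Rightarrow> 'a list \<Rightarrow> 'a)"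

definition alg :: "('f \<Rightarrow> nat) \<Rightarrow> ('a,'f) alg \<Rightarrow> bool" where
  "alg ar X \<longleftrightarrow> fst X \<noteq> {} \<and>
     (\<forall>g xs. length xs = ar g \<and> set xs \<subseteq> fst X \<longrightarrow> snd X g xs \<in> fst X)"

definition alg_emb :: "('f \<Rightarrow> nat) \<Rightarrow> ('a \<Rightarrow> 'b) \<Rightarrow> ('a,'f) alg \<Rightarrow> ('b,'f) alg \<Rightarrow> bool" where
  "alg_emb ar h X Y \<longleftrightarrow> inj_on h (fst X) \<and> h ` fst X \<subseteq> fst Y \<and>
     (\<forall>g xs. length xs = ar g \<and> set xs \<subseteq> fst X \<longrightarrow> h (snd X g xs) = snd Y g (map h xs))"

datatype 'f trm = Var nat | App 'f "'f trm list"

fun wf_trm :: "('f \<Rightarrow> nat) \<Rightarrow> 'f trm \<Rightarrow> bool" where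
  "wf_trm ar (Var i) = True"
| "wf_trm ar (App g ts) = (length ts = ar g \<and> (\<forall>t\<in>set ts. wf_trm ar t))"

fun vars :: "'f trm \<Rightarrow> nat set" where
  "vars (Var i) = {i}"
| "vars (App g ts) = (\<Union>t\<in>set ts. vars t)"

fun eval :: "('f \<Rightarrow> 'a list \<Rightarrow> 'a) \<Rightarrow> (nat \<Rightarrow> 'a) \<Rightarrow> 'f trm \<Rightarrow> 'a" where
  "eval ops env (Var i) = env i"
| "eval ops env (App g ts) = ops g (map (eval ops env) ts)"

definition holds :: "('a,'f) alg \<Rightarrow> 'f trm \<Rightarrow> 'f trm \<Rightarrow> bool" where
  "holds X s t \<longleftrightarrow> (\<forall>env. range env \<subseteq> fst X \<longrightarrow> eval (snd X) env s = eval (snd X) env t)"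

definition primal :: "('f \<Rightarrow> nat) \<Rightarrow> ('a,'f) alg \<Rightarrow> bool" where
  "primal ar A \<longleftrightarrow> alg ar A \<and> finite (fst A) \<and> card (fst A) \<ge> 2 \<and>
     (\<forall>n\<ge>1. \<forall>G :: 'a list \<Rightarrow> 'a.
        (\<forall>xs. length xs = n \<and> set xs \<subseteq> fst A \<longrightarrow> G xs \<in> fst A) \<longrightarrow>
        (\<exists>t. wf_trm ar t \<and> vars t \<subseteq> {..<n} \<and>
           (\<forall>xs. length xs = n \<and> set xs \<subseteq> fst A \<longrightarrow> eval (snd A) (\<lambda>i. xs ! i) t = G xs)))"

text \<open>Objects: finite algebras (of the same signature) in the variety generated by A,
  i.e. satisfying every identity valid in A.\<close>
definition Vfin :: "('f \<Rightarrow> nat) \<Rightarrow> ('a,'f) alg \<Rightarrow> ('b,'f) alg \<Rightarrow> bool" where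
  "Vfin ar A X \<longleftrightarrow> alg ar X \<and> finite (fst X) \<and>
     (\<forall>s t. wf_trm ar s \<and> wf_trm ar t \<and> holds A s t \<longrightarrow> holds X s t)"

definition pow_carrier :: "('a,'f) alg \<Rightarrow> nat \<Rightarrow> 'a list set" where
  "pow_carrier A n = {xs. length xs = n \<and> set xs \<subseteq> fst A}"

definition pow_ops :: "('a,'f) alg \<Rightarrow> nat \<Rightarrow> 'f \<Rightarrow> 'a list list \<Rightarrow> 'a list" where
  "pow_ops A n g xss = map (\<lambda>i. snd A g (map (\<lambda>xs. xs ! i) xss)) [0..<n]"

text \<open>Positions are 0-indexed; pi is a permutation of {0..<n}.
  x is antilexicographically below y w.r.t. pi.\<close>
definition antilex_less :: "('a \<times> 'a) set \<Rightarrow> (nat \<Rightarrow> nat) \<Rightarrow> nat \<Rightarrow> 'a list \<Rightarrow> 'a list \<Rightarrow> bool" where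
  "antilex_less lt pi n xs ys \<longleftrightarrow>
     (\<exists>s<n. (\<forall>t. s < t \<and> t < n \<longrightarrow> xs ! (pi t) = ys ! (pi t)) \<and>
            (xs ! (pi s), ys ! (pi s)) \<in> lt)"

definition antilex_le :: "('a \<times> 'a) set \<Rightarrow> (nat \<Rightarrow> nat) \<Rightarrow> nat \<Rightarrow> 'a list \<Rightarrow> 'a list \<Rightarrow> bool" where
  "antilex_le lt pi n xs ys \<longleftrightarrow> xs = ys \<or> antilex_less lt pi n xs ys"

definition OVfin :: "('f \<Rightarrow> nat) \<Rightarrow> ('a,'f) alg \<Rightarrow> ('a \<times> 'a) set \<Rightarrow>
    ('b,'f) alg \<times> ('b \<Rightarrow> 'b \<Rightarrow> bool) \<Rightarrow> bool" where
  "OVfin ar A lt XO \<longleftrightarrow> (case XO of (X, le) \<Rightarrow> alg ar X \<and>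
     (\<exists>n pi h. bij_betw pi {..<n} {..<n} \<and> bij_betw h (fst X) (pow_carrier A n) \<and>
        (\<forall>g xs. length xs = ar g \<and> set xs \<subseteq> fst X \<longrightarrow>
            h (snd X g xs) = pow_ops A n g (map h xs)) \<and>
        (\<forall>x\<in>fst X. \<forall>y\<in>fst X. le x y \<longleftrightarrow> antilex_le lt pi n (h x) (h y))))"

definition linear_on :: "'b set \<Rightarrow> ('b \<Rightarrow> 'b \<Rightarrow> bool) \<Rightarrow> bool" where
  "linear_on S le \<longleftrightarrow> (\<forall>x\<in>S. le x x) \<and>
     (\<forall>x\<in>S. \<forall>y\<in>S. le x y \<and> le y x \<longrightarrow> x = y) \<and>
     (\<forall>x\<in>S. \<forall>y\<in>S. \<forall>z\<in>S. le x y \<and> le y z \<longrightarrow> le x z) \<and>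
     (\<forall>x\<in>S. \<forall>y\<in>S. le x y \<or> le y x)"

definition ord_emb :: "('f \<Rightarrow> nat) \<Rightarrow> ('a \<Rightarrow> 'b) \<Rightarrow> ('a,'f) alg \<times> ('a \<Rightarrow> 'a \<Rightarrow> bool) \<Rightarrow>
    ('b,'f) alg \<times> ('b \<Rightarrow> 'b \<Rightarrow> bool) \<Rightarrow> bool" where
  "ord_emb ar h XO YO \<longleftrightarrow> alg_emb ar h (fst XO) (fst YO) \<and>
     (\<forall>x\<in>fst (fst XO). \<forall>y\<in>fst (fst XO). snd XO x y \<longleftrightarrow> snd YO (h x) (h y))"

text \<open>C* (objects Cs) is an order expansion of C (objects C), on structures with
  carrier type 'b: every C*-object is a finite linearly ordered structure whose
  reduct is a C-object, and the forgetful functor is surjective on objects.\<close>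
definition order_expansion :: "(('b,'f) alg \<Rightarrow> bool) \<Rightarrow>
    (('b,'f) alg \<times> ('b \<Rightarrow> 'b \<Rightarrow> bool) \<Rightarrow> bool) \<Rightarrow> bool" where
  "order_expansion C Cs \<longleftrightarrow>
     (\<forall>X le. Cs (X, le) \<longrightarrow> finite (fst X) \<and> linear_on (fst X) le \<and> C X) \<and>
     (\<forall>X. C X \<longrightarrow> (\<exists>le. Cs (X, le)))"

text \<open>Reasonableness, with source objects of carrier type 'b and target objects of
  carrier type 'c (C1/Cs1 and C2/Cs2 are the same categories at these two types).\<close>
definition reasonable :: "('f \<Rightarrow> nat) \<Rightarrow> (('b,'f) alg \<Rightarrow> bool) \<Rightarrow> (('c,'f) alg \<Rightarrow> bool) \<Rightarrow>
    (('b,'f) alg \<times> ('b \<Rightarrow> 'b \<Rightarrow> bool) \<Rightarrow> bool) \<Rightarrow>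
    (('c,'f) alg \<times> ('c \<Rightarrow> 'c \<Rightarrow> bool) \<Rightarrow> bool) \<Rightarrow> bool" where
  "reasonable ar C1 C2 Cs1 Cs2 \<longleftrightarrow>
     (\<forall>X Y h le. C1 X \<and> C2 Y \<and> alg_emb ar h X Y \<and> Cs1 (X, le) \<longrightarrow>
        (\<exists>le'. Cs2 (Y, le') \<and> ord_emb ar h (X, le) (Y, le')))"

end

theory Submission
  imports Defs
begin

text \<open>
  Let A be primal and X a finite algebra in its variety, enumerated by N elements. The N-ary
  operations on A form the free algebra on N generators, and evaluating them at the enumeration
  maps this free algebra onto X. Using a 4-ary switching operation one shows that its kernel is
  determined by the values at a set S of points, so X is isomorphic to A^S (Foster's theorem).
  Since A is primal, every homomorphism from A^m to A is a projection; hence every embedding of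
  A^m into A^n duplicates and rearranges coordinates. Listing the duplicated positions first and
  then one preimage of each coordinate in the order given by a permutation pi of m yields a
  permutation of n for which the embedding preserves and reflects the antilexicographic orders. This gives
  reasonableness; the order expansion part follows because antilexicographic orders are linear
  and powers of A lie in the variety.
\<close>

section \<open>Homomorphisms and term evaluation\<close>

definition hom_on ::
    "('f \<Rightarrow> nat) \<Rightarrow> ('a \<Rightarrow> 'b) \<Rightarrow> ('a,'f) alg \<Rightarrow> ('f \<Rightarrow> 'b list \<Rightarrow> 'b) \<Rightarrow> bool" where
  "hom_on ar h X ops \<longleftrightarrow>
     (\<forall>g xs. length xs = ar g \<and> set xs \<subseteq> fst X \<longrightarrow> h (snd X g xs) = ops g (map h xs))"

lemma hom_onD:
  "hom_on ar h X ops \<Longrightarrow> length xs = ar g \<Longrightarrow> set xs \<subseteq> fst X \<Longrightarrow>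
    h (snd X g xs) = ops g (map h xs)"
  unfolding hom_on_def by blast

lemma alg_emb_iff: "alg_emb ar h X Y \<longleftrightarrow> inj_on h (fst X) \<and> h ` fst X \<subseteq> fst Y \<and> hom_on ar h X (snd Y)"
  unfolding alg_emb_def hom_on_def ..

abbreviation pow_alg :: "('a,'f) alg \<Rightarrow> nat \<Rightarrow> ('a list,'f) alg" where
  "pow_alg A n \<equiv> (pow_carrier A n, pow_ops A n)"

definition pow_iso ::
    "('f \<Rightarrow> nat) \<Rightarrow> ('a,'f) alg \<Rightarrow> nat \<Rightarrow> ('b,'f) alg \<Rightarrow> ('b \<Rightarrow> 'a list) \<Rightarrow> bool" where
  "pow_iso ar A n X h \<longleftrightarrow> bij_betw h (fst X) (pow_carrier A n) \<and> hom_on ar h X (pow_ops A n)"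

lemma eval_cong:
  "(\<And>i. i \<in> vars t \<Longrightarrow> env i = env' i) \<Longrightarrow> eval ops env t = eval ops env' t"
proof (induction t)
  case (App g ts) then show ?case by (auto intro!: map_cong arg_cong[where f="ops g"])
qed simp

lemma eval_closed:
  assumes "alg ar X" "wf_trm ar t" "\<And>i. i \<in> vars t \<Longrightarrow> env i \<in> fst X"
  shows "eval (snd X) env t \<in> fst X"
  using assms(2,3)
proof (induction t)
  case (App g ts)
  then have "set (map (eval (snd X) env) ts) \<subseteq> fst X" by auto
  then show ?case using assms(1) App.prems unfolding alg_def by auto
qed simp

lemma eval_hom:
  assumes "alg ar X" "hom_on ar h X ops" "wf_trm ar t" "\<And>j. j \<in> vars t \<Longrightarrow> env j \<in> fst X"
  shows "h (eval (snd X) env t) = eval ops (\<lambda>j. h (env j)) t"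
  using assms(3,4)
proof (induction t)
  case (App g ts)
  have "set (map (eval (snd X) env) ts) \<subseteq> fst X"
    using App.prems by (auto intro!: eval_closed[OF assms(1)])
  then have "h (eval (snd X) env (App g ts)) = ops g (map h (map (eval (snd X) env) ts))"
    using hom_onD[OF assms(2)] App.prems by simp
  also have "map h (map (eval (snd X) env) ts) = map (eval ops (\<lambda>j. h (env j))) ts"
    using App by auto
  finally show ?case by simp
qed simp

lemma hom_on_comp:
  assumes "hom_on ar h X (snd Y)" "h ` fst X \<subseteq> fst Y" "hom_on ar k Y ops"
  shows "hom_on ar (k \<circ> h) X ops"
  unfolding hom_on_def
proof (intro allI impI, elim conjE)
  fix g xs assume xs: "length xs = ar g" "set xs \<subseteq> fst X"
  then have "set (map h xs) \<subseteq> fst Y" using assms(2) by auto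
  then show "(k \<circ> h) (snd X g xs) = ops g (map (k \<circ> h) xs)"
    using xs hom_onD[OF assms(1)] hom_onD[OF assms(3)] by simp
qed

lemma hom_on_inv_into:
  assumes "alg ar X" "bij_betw h (fst X) (fst Y)" "hom_on ar h X (snd Y)"
  shows "hom_on ar (inv_into (fst X) h) Y (snd X)"
  unfolding hom_on_def
proof (intro allI impI, elim conjE)
  fix g ys assume ys: "length ys = ar g" "set ys \<subseteq> fst Y"
  define xs where "xs = map (inv_into (fst X) h) ys"
  have xs: "set xs \<subseteq> fst X" "map h xs = ys"
    using ys(2) assms(2) unfolding xs_def bij_betw_def
    by (auto simp: inv_into_into f_inv_into_f intro!: map_idI)
  have "snd X g xs \<in> fst X" using assms(1) xs(1) ys(1) unfolding alg_def xs_def by simp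
  moreover have "h (snd X g xs) = snd Y g ys" using hom_onD[OF assms(3)] xs ys(1) unfolding xs_def by simp
  ultimately show "inv_into (fst X) h (snd Y g ys) = snd X g (map (inv_into (fst X) h) ys)"
    using assms(2) unfolding bij_betw_def xs_def by (metis inv_into_f_f)
qed

section \<open>Powers of an algebra\<close>

lemma pow_carrier_finite: "finite (fst A) \<Longrightarrow> finite (pow_carrier A n)"
  unfolding pow_carrier_def using finite_lists_length_eq[of "fst A" n] by (simp add: conj_commute)

lemma nth_in_pow_carrier: "xs \<in> pow_carrier A n \<Longrightarrow> i < n \<Longrightarrow> xs ! i \<in> fst A"
  unfolding pow_carrier_def by auto

lemma length_pow_ops [simp]: "length (pow_ops A n g us) = n"
  by (simp add: pow_ops_def)

lemma nth_pow_ops [simp]: "i < n \<Longrightarrow> pow_ops A n g us ! i = snd A g (map (\<lambda>u. u ! i) us)"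
  by (simp add: pow_ops_def)

lemma alg_pow:
  assumes "alg ar A" shows "alg ar (pow_alg A n)"
  unfolding alg_def
proof (intro conjI allI impI; (elim conjE)?)
  obtain a where "a \<in> fst A" using assms unfolding alg_def by auto
  then have "replicate n a \<in> pow_carrier A n" unfolding pow_carrier_def by auto
  then show "fst (pow_alg A n) \<noteq> {}" by auto
next
  fix g us assume us: "length us = ar g" "set us \<subseteq> fst (pow_alg A n)"
  have "set (map (\<lambda>u. u ! i) us) \<subseteq> fst A" if "i < n" for i
    using us that by (auto intro: nth_in_pow_carrier)
  then have "snd A g (map (\<lambda>u. u ! i) us) \<in> fst A" if "i < n" for i
    using assms us(1) that unfolding alg_def by simp
  then show "snd (pow_alg A n) g us \<in> fst (pow_alg A n)"
    unfolding pow_carrier_def pow_ops_def by auto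
qed

lemma eval_pow:
  assumes "\<And>j. j \<in> vars t \<Longrightarrow> length (env j) = n"
  shows "eval (pow_ops A n) env t = map (\<lambda>i. eval (snd A) (\<lambda>j. env j ! i) t) [0..<n]"
  using assms
proof (induction t)
  case (Var x) then show ?case by (auto intro: nth_equalityI)
next
  case (App g ts)
  then have "map (eval (pow_ops A n) env) ts = map (\<lambda>t. map (\<lambda>i. eval (snd A) (\<lambda>j. env j ! i) t) [0..<n]) ts"
    by auto
  then have "eval (pow_ops A n) env (App g ts) =
      pow_ops A n g (map (\<lambda>t. map (\<lambda>i. eval (snd A) (\<lambda>j. env j ! i) t) [0..<n]) ts)"
    by (simp only: eval.simps)
  also have "\<dots> = map (\<lambda>i. eval (snd A) (\<lambda>j. env j ! i) (App g ts)) [0..<n]"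
    by (simp add: pow_ops_def o_def)
  finally show ?case .
qed

lemma holds_pow:
  assumes "holds A s t" shows "holds (pow_alg A n) s t"
  unfolding holds_def
proof (intro allI impI)
  fix env :: "nat \<Rightarrow> 'a list" assume "range env \<subseteq> fst (pow_alg A n)"
  then have env: "env j \<in> pow_carrier A n" for j by auto
  then have "range (\<lambda>j. env j ! i) \<subseteq> fst A" if "i < n" for i
    using that by (auto intro: nth_in_pow_carrier)
  then show "eval (snd (pow_alg A n)) env s = eval (snd (pow_alg A n)) env t"
    using assms env unfolding holds_def pow_carrier_def by (simp add: eval_pow)
qed

lemma holds_inj_hom:
  assumes "alg ar X" "inj_on h (fst X)" "h ` fst X \<subseteq> fst Y" "hom_on ar h X (snd Y)"
    and "wf_trm ar s" "wf_trm ar t" "holds Y s t"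
  shows "holds X s t"
  unfolding holds_def
proof (intro allI impI)
  fix env :: "nat \<Rightarrow> _" assume "range env \<subseteq> fst X"
  then have env: "env j \<in> fst X" for j by auto
  have "h (eval (snd X) env s) = eval (snd Y) (\<lambda>j. h (env j)) s"
    using eval_hom[OF assms(1,4,5) env] .
  also have "\<dots> = eval (snd Y) (\<lambda>j. h (env j)) t"
    using assms(3,7) env unfolding holds_def by (auto simp: image_subset_iff)
  also have "\<dots> = h (eval (snd X) env t)"
    using eval_hom[OF assms(1,4,6) env] by simp
  moreover have "eval (snd X) env s \<in> fst X" "eval (snd X) env t \<in> fst X"
    using env eval_closed[OF assms(1)] assms(5,6) by auto
  ultimately show "eval (snd X) env s = eval (snd X) env t"
    using assms(2) by (auto dest: inj_onD)
qed

lemma Vfin_if_pow_iso: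
  assumes "alg ar A" "finite (fst A)" "alg ar X" "pow_iso ar A n X h"
  shows "Vfin ar A X"
proof -
  have h: "bij_betw h (fst X) (pow_carrier A n)" "hom_on ar h X (pow_ops A n)"
    using assms(4) unfolding pow_iso_def by auto
  have "finite (fst X)" using h(1) pow_carrier_finite[OF assms(2)] bij_betw_finite by blast
  moreover have "holds X s t" if "wf_trm ar s" "wf_trm ar t" "holds A s t" for s t
    by (rule holds_inj_hom[where Y="pow_alg A n", OF assms(3)])
      (use h that(1,2) holds_pow[OF that(3)] in \<open>auto simp: bij_betw_def\<close>)
  ultimately show ?thesis unfolding Vfin_def using assms(3) by blast
qed

lemma primal_alg: "primal ar A \<Longrightarrow> alg ar A"
  and primal_finite: "primal ar A \<Longrightarrow> finite (fst A)"
  unfolding primal_def by blast+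

lemma primal_two:
  assumes "primal ar A" obtains a b where "a \<in> fst A" "b \<in> fst A" "a \<noteq> b"
proof -
  have "finite (fst A)" "card (fst A) \<ge> 2" using assms unfolding primal_def by blast+
  then show ?thesis using that by (metis card_le_Suc0_iff_eq not_less_eq_eq numeral_2_eq_2)
qed

lemma primal_termE:
  assumes "primal ar A" "m \<ge> 1" "\<And>xs. xs \<in> pow_carrier A m \<Longrightarrow> P xs \<in> fst A"
  obtains t where "wf_trm ar t" "vars t \<subseteq> {..<m}"
    "\<And>xs. xs \<in> pow_carrier A m \<Longrightarrow> eval (snd A) ((!) xs) t = P xs"
proof -
  have "\<exists>t. wf_trm ar t \<and> vars t \<subseteq> {..<m} \<and>
      (\<forall>xs. length xs = m \<and> set xs \<subseteq> fst A \<longrightarrow> eval (snd A) (\<lambda>i. xs ! i) t = P xs)"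
    using assms unfolding primal_def pow_carrier_def by auto
  then show ?thesis using that unfolding pow_carrier_def by auto
qed

section \<open>Foster's theorem\<close>

locale Vfin_primal =
  fixes ar :: "'f \<Rightarrow> nat" and A :: "('a,'f) alg" and X :: "('b,'f) alg"
  assumes primal: "primal ar A" and Vfin: "Vfin ar A X"
begin

lemma alg_X: "alg ar X" and finite_X: "finite (fst X)"
  using Vfin unfolding Vfin_def by blast+

definition gens :: "'b list" where
  "gens = (SOME xs. set xs = fst X)"

lemma set_gens: "set gens = fst X"
  unfolding gens_def using finite_list[OF finite_X] by (rule someI_ex)

abbreviation N :: nat where
  "N \<equiv> length gens"

lemma N_pos: "N \<ge> 1"
  using set_gens alg_X unfolding alg_def by (cases gens) auto

lemma gens_in_X: "i < N \<Longrightarrow> gens ! i \<in> fst X"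
  using set_gens nth_mem by blast

text \<open>Since A is primal, funs is the free algebra of the variety on N generators, and val is
  the evaluation map sending the i-th projection to gens ! i.\<close>

definition funs :: "('a list \<Rightarrow> 'a) set" where
  "funs = {G. \<forall>c\<in>pow_carrier A N. G c \<in> fst A}"

definition represents :: "'f trm \<Rightarrow> ('a list \<Rightarrow> 'a) \<Rightarrow> bool" where
  "represents t G \<longleftrightarrow> wf_trm ar t \<and> vars t \<subseteq> {..<N} \<and>
     (\<forall>c\<in>pow_carrier A N. eval (snd A) ((!) c) t = G c)"

definition val :: "('a list \<Rightarrow> 'a) \<Rightarrow> 'b" where
  "val G = eval (snd X) ((!) gens) (SOME t. represents t G)"

lemma ex_represents:
  assumes "G \<in> funs" shows "\<exists>t. represents t G"
proof -
  obtain t where "wf_trm ar t" "vars t \<subseteq> {..<N}"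
    "\<And>c. c \<in> pow_carrier A N \<Longrightarrow> eval (snd A) ((!) c) t = G c"
    using primal_termE[OF primal N_pos, of G] assms unfolding funs_def by blast
  then show ?thesis unfolding represents_def by blast
qed

lemma represents_cong:
  "represents t G \<Longrightarrow> (\<And>c. c \<in> pow_carrier A N \<Longrightarrow> G c = G' c) \<Longrightarrow> represents t G'"
  unfolding represents_def by auto

lemma eval_gens_eq:
  assumes "represents t G" "represents t' G"
  shows "eval (snd X) ((!) gens) t = eval (snd X) ((!) gens) t'"
proof -
  have "holds A t t'" unfolding holds_def
  proof (intro allI impI)
    fix env :: "nat \<Rightarrow> 'a" assume "range env \<subseteq> fst A"
    then have c: "map env [0..<N] \<in> pow_carrier A N" unfolding pow_carrier_def by auto
    have "eval (snd A) env t = eval (snd A) ((!) (map env [0..<N])) t"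
      by (rule eval_cong) (use assms(1) in \<open>auto simp: represents_def\<close>)
    also have "\<dots> = eval (snd A) ((!) (map env [0..<N])) t'"
      using assms c unfolding represents_def by simp
    also have "\<dots> = eval (snd A) env t'"
      by (rule eval_cong) (use assms(2) in \<open>auto simp: represents_def\<close>)
    finally show "eval (snd A) env t = eval (snd A) env t'" .
  qed
  then have "holds X t t'" using Vfin assms unfolding Vfin_def represents_def by blast
  moreover define env where "env j = gens ! (if j < N then j else 0)" for j
  moreover have "range env \<subseteq> fst X"
    using N_pos gens_in_X unfolding env_def by (auto simp: Suc_le_eq)
  ultimately have "eval (snd X) env t = eval (snd X) env t'" unfolding holds_def by blast
  moreover have "eval (snd X) env u = eval (snd X) ((!) gens) u" if "represents u G" for u
    by (rule eval_cong) (use that in \<open>auto simp: represents_def env_def\<close>)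
  ultimately show ?thesis using assms by simp
qed

lemma val_eq: "represents t G \<Longrightarrow> val G = eval (snd X) ((!) gens) t"
  unfolding val_def by (rule eval_gens_eq[OF someI])

lemma val_cong:
  assumes "G \<in> funs" "\<And>c. c \<in> pow_carrier A N \<Longrightarrow> G c = G' c"
  shows "val G = val G'"
proof -
  obtain t where "represents t G" using ex_represents[OF assms(1)] ..
  then show ?thesis using represents_cong[of t G G'] assms(2) val_eq by simp
qed

lemma val_in_X:
  assumes "G \<in> funs" shows "val G \<in> fst X"
proof -
  obtain t where t: "represents t G" using ex_represents[OF assms] ..
  have "gens ! i \<in> fst X" if "i \<in> vars t" for i
    using t that gens_in_X unfolding represents_def by auto
  then show ?thesis using t val_eq eval_closed[OF alg_X] unfolding represents_def by simp
qed

lemma val_surj: "x \<in> fst X \<Longrightarrow> \<exists>G\<in>funs. val G = x"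
proof -
  assume "x \<in> fst X"
  then obtain i where i: "i < N" "x = gens ! i" using set_gens by (metis in_set_conv_nth)
  then have "represents (Var i) (\<lambda>c. c ! i)" unfolding represents_def by simp
  moreover have "(\<lambda>c. c ! i) \<in> funs" using i unfolding funs_def by (auto intro: nth_in_pow_carrier)
  moreover have "val (\<lambda>c. c ! i) = gens ! i" using val_eq[OF \<open>represents (Var i) _\<close>] by simp
  ultimately show ?thesis using i by blast
qed

lemma funs_op:
  assumes "length Hs = ar g" "set Hs \<subseteq> funs"
  shows "(\<lambda>c. snd A g (map (\<lambda>H. H c) Hs)) \<in> funs"
  unfolding funs_def
proof (intro CollectI ballI)
  fix c assume "c \<in> pow_carrier A N"
  then have "set (map (\<lambda>H. H c) Hs) \<subseteq> fst A" using assms(2) unfolding funs_def by auto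
  then show "snd A g (map (\<lambda>H. H c) Hs) \<in> fst A"
    using assms(1) primal_alg[OF primal] unfolding alg_def by simp
qed

lemma funs_eval:
  "wf_trm ar t \<Longrightarrow> (\<And>j. j \<in> vars t \<Longrightarrow> \<gamma> j \<in> funs) \<Longrightarrow>
    (\<lambda>c. eval (snd A) (\<lambda>j. \<gamma> j c) t) \<in> funs"
  unfolding funs_def by (auto intro!: eval_closed[OF primal_alg[OF primal]])

lemma val_op:
  assumes "length Hs = ar g" "set Hs \<subseteq> funs"
  shows "val (\<lambda>c. snd A g (map (\<lambda>H. H c) Hs)) = snd X g (map val Hs)"
proof -
  have "\<forall>H\<in>set Hs. \<exists>t. represents t H" using ex_represents assms(2) by blast
  then obtain tm where tm: "\<And>H. H \<in> set Hs \<Longrightarrow> represents (tm H) H" by metis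
  have "represents (App g (map tm Hs)) (\<lambda>c. snd A g (map (\<lambda>H. H c) Hs))"
    using tm assms(1) unfolding represents_def by (auto intro!: arg_cong[where f="snd A g"])
  then have "val (\<lambda>c. snd A g (map (\<lambda>H. H c) Hs)) = eval (snd X) ((!) gens) (App g (map tm Hs))"
    by (rule val_eq)
  also have "\<dots> = snd X g (map (\<lambda>H. eval (snd X) ((!) gens) (tm H)) Hs)"
    by (simp add: o_def)
  also have "map (\<lambda>H. eval (snd X) ((!) gens) (tm H)) Hs = map val Hs"
    by (simp add: val_eq[OF tm])
  finally show ?thesis .
qed

lemma val_eval:
  "wf_trm ar t \<Longrightarrow> (\<And>j. j \<in> vars t \<Longrightarrow> \<gamma> j \<in> funs) \<Longrightarrow>
    val (\<lambda>c. eval (snd A) (\<lambda>j. \<gamma> j c) t) = eval (snd X) (\<lambda>j. val (\<gamma> j)) t"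
proof (induction t)
  case (App g ts)
  define Hs where "Hs = map (\<lambda>t c. eval (snd A) (\<lambda>j. \<gamma> j c) t) ts"
  have Hs: "set Hs \<subseteq> funs" using App.prems unfolding Hs_def by (auto intro!: funs_eval)
  have "val (\<lambda>c. eval (snd A) (\<lambda>j. \<gamma> j c) (App g ts)) = val (\<lambda>c. snd A g (map (\<lambda>H. H c) Hs))"
    by (simp add: Hs_def o_def)
  also have "\<dots> = snd X g (map val Hs)"
    using val_op[OF _ Hs] App.prems by (simp add: Hs_def)
  also have "map val Hs = map (eval (snd X) (\<lambda>j. val (\<gamma> j))) ts"
    unfolding Hs_def using App by auto
  finally show ?case by simp
qed simp

lemma val_compose:
  assumes s: "wf_trm ar s" "vars s \<subseteq> {..<k}"
    "\<And>xs. xs \<in> pow_carrier A k \<Longrightarrow> eval (snd A) ((!) xs) s = P xs"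
    and Fs: "length Fs = k" "set Fs \<subseteq> funs"
  shows "val (\<lambda>c. P (map (\<lambda>F. F c) Fs)) = eval (snd X) ((!) (map val Fs)) s"
proof -
  have Fs_funs: "Fs ! j \<in> funs" if "j \<in> vars s" for j
    using s(2) Fs that by (auto intro: nth_mem[THEN subsetD[rotated]])
  have "val (\<lambda>c. eval (snd A) (\<lambda>j. (Fs ! j) c) s) = val (\<lambda>c. P (map (\<lambda>F. F c) Fs))"
  proof (rule val_cong)
    show "(\<lambda>c. eval (snd A) (\<lambda>j. (Fs ! j) c) s) \<in> funs" using funs_eval[OF s(1)] Fs_funs by blast
    fix c assume c: "c \<in> pow_carrier A N"
    have "eval (snd A) (\<lambda>j. (Fs ! j) c) s = eval (snd A) ((!) (map (\<lambda>F. F c) Fs)) s"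
      by (rule eval_cong) (use s(2) Fs(1) in auto)
    also have "\<dots> = P (map (\<lambda>F. F c) Fs)"
    proof (rule s(3))
      show "map (\<lambda>F. F c) Fs \<in> pow_carrier A k" using Fs c unfolding pow_carrier_def funs_def by auto
    qed
    finally show "eval (snd A) (\<lambda>j. (Fs ! j) c) s = P (map (\<lambda>F. F c) Fs)" .
  qed
  moreover have "val (\<lambda>c. eval (snd A) (\<lambda>j. (Fs ! j) c) s) = eval (snd X) (\<lambda>j. val (Fs ! j)) s"
    using val_eval[OF s(1)] Fs_funs by blast
  moreover have "\<dots> = eval (snd X) ((!) (map val Fs)) s"
    by (rule eval_cong) (use s(2) Fs(1) in auto)
  ultimately show ?thesis by simp
qed

text \<open>The kernel of val is determined by its values at these points, so X is isomorphic to A^coords.\<close>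

definition coords :: "'a list set" where
  "coords = {c \<in> pow_carrier A N. \<forall>G\<in>funs. \<forall>G'\<in>funs. val G = val G' \<longrightarrow> G c = G' c}"

lemma val_switch:
  assumes "G \<in> funs" "G' \<in> funs" "H \<in> funs" "H' \<in> funs" "val H = val H'"
  shows "val (\<lambda>c. if H c = H' c then G c else G' c) = val G"
proof -
  define P where "P xs = (if xs ! 0 = xs ! 1 then xs ! 2 else xs ! 3)" for xs :: "'a list"
  have "P xs \<in> fst A" if "xs \<in> pow_carrier A 4" for xs
    using that unfolding P_def by (auto intro: nth_in_pow_carrier)
  then obtain s where s: "wf_trm ar s" "vars s \<subseteq> {..<4}"
    "\<And>xs. xs \<in> pow_carrier A 4 \<Longrightarrow> eval (snd A) ((!) xs) s = P xs"
    using primal_termE[OF primal, of 4 P] by auto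
  have "val (\<lambda>c. P (map (\<lambda>F. F c) [H, H', G, G'])) = val (\<lambda>c. P (map (\<lambda>F. F c) [H, H, G, G']))"
    using val_compose[OF s, of "[H, H', G, G']"] val_compose[OF s, of "[H, H, G, G']"] assms
    by simp
  then show ?thesis by (simp add: P_def cong: if_cong)
qed

lemma val_update:
  assumes "G \<in> funs" "c \<in> pow_carrier A N" "c \<notin> coords" "v \<in> fst A"
  shows "val (G(c := v)) = val G"
proof -
  obtain H H' where HH': "H \<in> funs" "H' \<in> funs" "val H = val H'" "H c \<noteq> H' c"
    using assms(2,3) unfolding coords_def by blast
  have "G(c := v) \<in> funs" using assms(1,4) unfolding funs_def by auto
  moreover have "(\<lambda>d. if H d = H' d then G d else (G(c := v)) d) = G(c := v)"
    using HH'(4) by auto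
  ultimately show ?thesis using val_switch[OF assms(1) _ HH'(1-3), of "G(c := v)"] by simp
qed

lemma val_eq_if_agree_off:
  "finite D \<Longrightarrow> D \<subseteq> pow_carrier A N - coords \<Longrightarrow> G \<in> funs \<Longrightarrow> G' \<in> funs \<Longrightarrow>
    (\<And>c. c \<in> pow_carrier A N - D \<Longrightarrow> G c = G' c) \<Longrightarrow> val G = val G'"
proof (induction D arbitrary: G rule: finite_induct)
  case empty
  then show ?case using val_cong[of G G'] by blast
next
  case (insert c D)
  have c: "c \<in> pow_carrier A N" "c \<notin> coords" using insert.prems(1) by auto
  then have v: "G' c \<in> fst A" using insert.prems(3) unfolding funs_def by blast
  have "val G = val (G(c := G' c))" using val_update[OF insert.prems(2) c v] by simp
  also have "\<dots> = val G'"
  proof (rule insert.IH)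
    show "D \<subseteq> pow_carrier A N - coords" using insert.prems(1) by blast
    show "G(c := G' c) \<in> funs" using insert.prems(2) v unfolding funs_def by simp
    show "G' \<in> funs" by (rule insert.prems(3))
    show "(G(c := G' c)) d = G' d" if "d \<in> pow_carrier A N - D" for d
      using insert.prems(4)[of d] that by (cases "d = c") auto
  qed
  finally show ?case .
qed

lemma val_eq_if_agree_on_coords:
  assumes "G \<in> funs" "G' \<in> funs" "\<And>c. c \<in> coords \<Longrightarrow> G c = G' c"
  shows "val G = val G'"
proof (rule val_eq_if_agree_off[OF _ _ assms(1,2)])
  show "finite {c \<in> pow_carrier A N. G c \<noteq> G' c}"
    using pow_carrier_finite[OF primal_finite[OF primal]] by simp
  show "{c \<in> pow_carrier A N. G c \<noteq> G' c} \<subseteq> pow_carrier A N - coords"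
    using assms(3) by blast
qed blast

lemma agree_on_coords:
  "G \<in> funs \<Longrightarrow> G' \<in> funs \<Longrightarrow> val G = val G' \<Longrightarrow> c \<in> coords \<Longrightarrow> G c = G' c"
  unfolding coords_def by blast

definition coord_list :: "'a list list" where
  "coord_list = (SOME cs. distinct cs \<and> set cs = coords)"

abbreviation dim :: nat where
  "dim \<equiv> length coord_list"

lemma distinct_coord_list: "distinct coord_list"
  and set_coord_list: "set coord_list = coords"
proof -
  have "finite coords"
    using pow_carrier_finite[OF primal_finite[OF primal]] unfolding coords_def by simp
  then have "\<exists>cs. distinct cs \<and> set cs = coords" using finite_distinct_list by blast
  then have "distinct coord_list \<and> set coord_list = coords"
    unfolding coord_list_def by (rule someI_ex)
  then show "distinct coord_list" "set coord_list = coords" by auto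
qed

definition pre :: "'b \<Rightarrow> 'a list \<Rightarrow> 'a" where
  "pre x = (SOME G. G \<in> funs \<and> val G = x)"

lemma pre_spec: "x \<in> fst X \<Longrightarrow> pre x \<in> funs \<and> val (pre x) = x"
proof -
  assume "x \<in> fst X"
  then have "\<exists>G. G \<in> funs \<and> val G = x" using val_surj by blast
  then show ?thesis unfolding pre_def by (rule someI_ex)
qed

definition iso :: "'b \<Rightarrow> 'a list" where
  "iso x = map (pre x) coord_list"

lemma iso_val: "G \<in> funs \<Longrightarrow> iso (val G) = map G coord_list"
  unfolding iso_def using pre_spec[OF val_in_X] agree_on_coords set_coord_list by auto

lemma inj_on_iso: "inj_on iso (fst X)"
proof (rule inj_onI)
  fix x y assume xy: "x \<in> fst X" "y \<in> fst X" "iso x = iso y"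
  then have "\<And>c. c \<in> coords \<Longrightarrow> pre x c = pre y c" unfolding iso_def using set_coord_list by auto
  then have "val (pre x) = val (pre y)" using val_eq_if_agree_on_coords pre_spec xy(1,2) by blast
  then show "x = y" using pre_spec xy(1,2) by simp
qed

lemma iso_image: "iso ` fst X = pow_carrier A dim"
proof
  show "iso ` fst X \<subseteq> pow_carrier A dim"
    using pre_spec set_coord_list unfolding iso_def pow_carrier_def funs_def coords_def by fastforce
next
  show "pow_carrier A dim \<subseteq> iso ` fst X"
  proof
    fix ys assume ys: "ys \<in> pow_carrier A dim"
    obtain a where a: "a \<in> fst A" using primal_alg[OF primal] unfolding alg_def by auto
    have bij: "bij_betw ((!) coord_list) {..<dim} coords"
      by (rule bij_betw_nth[OF distinct_coord_list]) (simp_all add: set_coord_list)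
    define index where "index = the_inv_into {..<dim} ((!) coord_list)"
    define G where "G c = (if c \<in> coords then ys ! index c else a)" for c
    have "index c < dim" if "c \<in> coords" for c
      using bij_betw_the_inv_into[OF bij] that unfolding index_def bij_betw_def by auto
    then have "G \<in> funs" using ys a unfolding G_def funs_def by (auto intro: nth_in_pow_carrier)
    moreover have "map G coord_list = ys"
    proof (rule nth_equalityI)
      show "length (map G coord_list) = length ys" using ys unfolding pow_carrier_def by simp
      fix i assume "i < length (map G coord_list)"
      then have i: "i < dim" by simp
      then have "coord_list ! i \<in> coords" using set_coord_list nth_mem by blast
      moreover have "index (coord_list ! i) = i"
        using bij i unfolding index_def bij_betw_def by (simp add: the_inv_into_f_f)
      ultimately show "map G coord_list ! i = ys ! i" unfolding G_def using i by simp
    qed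
    ultimately show "ys \<in> iso ` fst X" using iso_val val_in_X by (intro image_eqI) auto
  qed
qed

lemma hom_on_iso: "hom_on ar iso X (pow_ops A dim)"
  unfolding hom_on_def
proof (intro allI impI, elim conjE)
  fix g xs assume xs: "length xs = ar g" "set xs \<subseteq> fst X"
  define Hs where "Hs = map pre xs"
  have Hs: "length Hs = ar g" "set Hs \<subseteq> funs" "map val Hs = xs"
    using xs pre_spec unfolding Hs_def by (auto intro!: map_idI)
  have "iso (snd X g xs) = iso (val (\<lambda>c. snd A g (map (\<lambda>H. H c) Hs)))"
    using val_op[OF Hs(1,2)] Hs(3) by simp
  also have "\<dots> = map (\<lambda>c. snd A g (map (\<lambda>H. H c) Hs)) coord_list"
    using iso_val funs_op[OF Hs(1,2)] by blast
  also have "\<dots> = pow_ops A dim g (map iso xs)"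
    by (rule nth_equalityI) (simp_all add: Hs_def iso_def o_def)
  finally show "iso (snd X g xs) = pow_ops A dim g (map iso xs)" .
qed

lemma pow_iso_iso: "pow_iso ar A dim X iso"
  unfolding pow_iso_def bij_betw_def using inj_on_iso iso_image hom_on_iso by blast

end

theorem Vfin_pow_isoE:
  assumes "primal ar A" "Vfin ar A X"
  obtains n h where "pow_iso ar A n X h"
proof -
  interpret Vfin_primal ar A X using assms by unfold_locales
  show ?thesis using pow_iso_iso that by blast
qed

section \<open>Antilexicographic orders\<close>

definition reindex :: "(nat \<Rightarrow> nat) \<Rightarrow> nat \<Rightarrow> 'a list \<Rightarrow> 'a list" where
  "reindex f n xs = map (\<lambda>j. xs ! f j) [0..<n]"

lemma length_reindex [simp]: "length (reindex f n xs) = n"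
  by (simp add: reindex_def)

lemma nth_reindex [simp]: "j < n \<Longrightarrow> reindex f n xs ! j = xs ! f j"
  by (simp add: reindex_def)

lemma reindex_nth_list: "reindex ((!) L) (length L) xs = map ((!) xs) L"
  by (simp add: reindex_def map_nth[of L, symmetric, THEN arg_cong[where f="map ((!) xs)"]] del: map_nth)

lemma reindex_eq_imp_eq:
  assumes "{..<length xs} \<subseteq> f ` {..<n}" "length xs = length ys" "reindex f n xs = reindex f n ys"
  shows "xs = ys"
proof (rule nth_equalityI)
  fix i assume "i < length xs"
  then obtain j where "j < n" "f j = i" using assms(1) by force
  then show "xs ! i = ys ! i" using assms(3) by (metis nth_reindex)
qed (rule assms(2))

lemma antilex_less_reindex:
  "antilex_less lt pi n xs ys \<longleftrightarrow> antilex_less lt id n (reindex pi n xs) (reindex pi n ys)"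
  unfolding antilex_less_def by auto

lemma antilex_less_append:
  assumes "length xs = k" "length xs' = k" "length ys = l" "length ys' = l"
  shows "antilex_less lt id (k + l) (xs @ ys) (xs' @ ys') \<longleftrightarrow>
    antilex_less lt id l ys ys' \<or> (ys = ys' \<and> antilex_less lt id k xs xs')"
proof
  assume "antilex_less lt id (k + l) (xs @ ys) (xs' @ ys')"
  then obtain s where s: "s < k + l" "\<forall>t. s < t \<and> t < k + l \<longrightarrow> (xs @ ys) ! t = (xs' @ ys') ! t"
    "((xs @ ys) ! s, (xs' @ ys') ! s) \<in> lt"
    unfolding antilex_less_def by auto
  show "antilex_less lt id l ys ys' \<or> (ys = ys' \<and> antilex_less lt id k xs xs')"
  proof (cases "s < k")
    case True
    have "ys ! i = ys' ! i" if "i < l" for i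
      using s(2)[rule_format, of "k + i"] True that assms by (simp add: nth_append)
    then have "ys = ys'" using assms by (simp add: nth_equalityI)
    moreover have "antilex_less lt id k xs xs'"
      unfolding antilex_less_def using s True assms
      by (intro exI[of _ s]) (auto simp: nth_append)
    ultimately show ?thesis by blast
  next
    case False
    have "ys ! t = ys' ! t" if "s - k < t" "t < l" for t
      using s(2)[rule_format, of "k + t"] False that assms by (simp add: nth_append)
    moreover have "(ys ! (s - k), ys' ! (s - k)) \<in> lt" using s(3) False assms by (simp add: nth_append)
    ultimately have "antilex_less lt id l ys ys'"
      unfolding antilex_less_def using s(1) False by (intro exI[of _ "s - k"]) auto
    then show ?thesis ..
  qed
next
  assume "antilex_less lt id l ys ys' \<or> (ys = ys' \<and> antilex_less lt id k xs xs')"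
  then show "antilex_less lt id (k + l) (xs @ ys) (xs' @ ys')"
  proof
    assume "antilex_less lt id l ys ys'"
    then obtain s where s: "s < l" "\<forall>t. s < t \<and> t < l \<longrightarrow> ys ! t = ys' ! t" "(ys ! s, ys' ! s) \<in> lt"
      unfolding antilex_less_def by auto
    have "(xs @ ys) ! t = (xs' @ ys') ! t" if "k + s < t" "t < k + l" for t
    proof -
      have "s < t - k" "t - k < l" "\<not> t < k" using that by auto
      then show ?thesis using s(2) assms by (simp add: nth_append)
    qed
    then show ?thesis unfolding antilex_less_def using s(1,3) assms
      by (intro exI[of _ "k + s"]) (auto simp: nth_append)
  next
    assume "ys = ys' \<and> antilex_less lt id k xs xs'"
    then obtain s where "ys = ys'" "s < k" "\<forall>t. s < t \<and> t < k \<longrightarrow> xs ! t = xs' ! t" "(xs ! s, xs' ! s) \<in> lt"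
      unfolding antilex_less_def by auto
    then show ?thesis unfolding antilex_less_def using assms
      by (intro exI[of _ s]) (auto simp: nth_append)
  qed
qed

lemma linear_on_pullback:
  assumes "inj_on h S" "h ` S \<subseteq> T" "linear_on T R"
    and le: "\<And>x y. x \<in> S \<Longrightarrow> y \<in> S \<Longrightarrow> le x y \<longleftrightarrow> R (h x) (h y)"
  shows "linear_on S le"
proof -
  have T: "h x \<in> T" if "x \<in> S" for x using assms(2) that by auto
  have R: "\<And>a. a \<in> T \<Longrightarrow> R a a"
    "\<And>a b. a \<in> T \<Longrightarrow> b \<in> T \<Longrightarrow> R a b \<Longrightarrow> R b a \<Longrightarrow> a = b"
    "\<And>a b c. a \<in> T \<Longrightarrow> b \<in> T \<Longrightarrow> c \<in> T \<Longrightarrow> R a b \<Longrightarrow> R b c \<Longrightarrow> R a c"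
    "\<And>a b. a \<in> T \<Longrightarrow> b \<in> T \<Longrightarrow> R a b \<or> R b a"
    using assms(3) unfolding linear_on_def by blast+
  show ?thesis unfolding linear_on_def
  proof (intro conjI ballI impI; (elim conjE)?)
    fix x assume "x \<in> S" then show "le x x" using R(1) T le by simp
  next
    fix x y assume "x \<in> S" "y \<in> S" "le x y" "le y x"
    then have "h x = h y" using R(2) T le by simp
    then show "x = y" using inj_onD[OF assms(1)] \<open>x \<in> S\<close> \<open>y \<in> S\<close> by blast
  next
    fix x y z assume "x \<in> S" "y \<in> S" "z \<in> S" "le x y" "le y z"
    then show "le x z" using R(3)[of "h x" "h y" "h z"] T le by simp
  next
    fix x y assume "x \<in> S" "y \<in> S" then show "le x y \<or> le y x" using R(4) T le by simp
  qed
qed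

lemma antilex_less_irrefl: "irrefl lt \<Longrightarrow> \<not> antilex_less lt pi n xs xs"
  unfolding antilex_less_def irrefl_def by blast

lemma antilex_less_trans:
  assumes "trans lt" "antilex_less lt pi n xs ys" "antilex_less lt pi n ys zs"
  shows "antilex_less lt pi n xs zs"
proof -
  obtain s1 where s1: "s1 < n" "\<forall>t. s1 < t \<and> t < n \<longrightarrow> xs ! pi t = ys ! pi t" "(xs ! pi s1, ys ! pi s1) \<in> lt"
    using assms(2) unfolding antilex_less_def by blast
  obtain s2 where s2: "s2 < n" "\<forall>t. s2 < t \<and> t < n \<longrightarrow> ys ! pi t = zs ! pi t" "(ys ! pi s2, zs ! pi s2) \<in> lt"
    using assms(3) unfolding antilex_less_def by blast
  define s where "s = max s1 s2"
  have "\<forall>t. s < t \<and> t < n \<longrightarrow> xs ! pi t = zs ! pi t" using s1(2) s2(2) unfolding s_def by auto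
  moreover have "(xs ! pi s, zs ! pi s) \<in> lt"
  proof (cases s1 s2 rule: linorder_cases)
    case less then show ?thesis using s1(2) s2(1,3) unfolding s_def by simp
  next
    case equal then show ?thesis using transD[OF assms(1) s1(3)] s2(3) unfolding s_def by simp
  next
    case greater then show ?thesis using s1(1,3) s2(2) unfolding s_def by simp
  qed
  moreover have "s < n" using s1(1) s2(1) unfolding s_def by simp
  ultimately show ?thesis unfolding antilex_less_def by blast
qed

lemma antilex_less_total:
  assumes "total_on B lt" "length xs = n" "length ys = n" "set xs \<subseteq> B" "set ys \<subseteq> B" "xs \<noteq> ys"
  shows "antilex_less lt id n xs ys \<or> antilex_less lt id n ys xs"
proof -
  define D where "D = {i. i < n \<and> xs ! i \<noteq> ys ! i}"
  have "D \<noteq> {}"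
  proof
    assume "D = {}"
    then have "xs = ys" using assms(2,3) by (intro nth_equalityI) (auto simp: D_def)
    then show False using assms(6) by contradiction
  qed
  moreover have fin: "finite D" unfolding D_def by simp
  ultimately have "Max D \<in> D" by (rule Max_in[rotated])
  then have s: "Max D < n" "xs ! Max D \<noteq> ys ! Max D" unfolding D_def by auto
  have above: "xs ! t = ys ! t" if "Max D < t" "t < n" for t
  proof (rule ccontr)
    assume "xs ! t \<noteq> ys ! t"
    then have "t \<le> Max D" using Max_ge[OF fin, of t] that(2) unfolding D_def by simp
    then show False using that(1) by simp
  qed
  have "xs ! Max D \<in> B" "ys ! Max D \<in> B" using s(1) assms(2-5) by auto
  then have "(xs ! Max D, ys ! Max D) \<in> lt \<or> (ys ! Max D, xs ! Max D) \<in> lt"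
    using assms(1) s(2) unfolding total_on_def by blast
  then show ?thesis unfolding antilex_less_def using s(1) above by auto
qed

lemma linear_on_antilex_le_id:
  assumes "strict_linear_order_on (fst A) lt"
  shows "linear_on (pow_carrier A n) (antilex_le lt id n)"
proof -
  have lt: "trans lt" "irrefl lt" "total_on (fst A) lt"
    using assms unfolding strict_linear_order_on_def by auto
  show ?thesis unfolding linear_on_def antilex_le_def
  proof (intro conjI ballI impI; (elim conjE)?)
    fix x y assume "x = y \<or> antilex_less lt id n x y" "y = x \<or> antilex_less lt id n y x"
    then show "x = y"
      using antilex_less_irrefl[OF lt(2)] antilex_less_trans[OF lt(1), of id n x y x] by auto
  next
    fix x y z assume "x = y \<or> antilex_less lt id n x y" "y = z \<or> antilex_less lt id n y z"
    then show "x = z \<or> antilex_less lt id n x z" using antilex_less_trans[OF lt(1), of id n x y z] by auto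
  next
    fix x y assume "x \<in> pow_carrier A n" "y \<in> pow_carrier A n"
    then show "(x = y \<or> antilex_less lt id n x y) \<or> y = x \<or> antilex_less lt id n y x"
      using antilex_less_total[OF lt(3), of x n y] unfolding pow_carrier_def by auto
  qed simp
qed

lemma linear_on_antilex_le:
  assumes "strict_linear_order_on (fst A) lt" "bij_betw pi {..<n} {..<n}"
  shows "linear_on (pow_carrier A n) (antilex_le lt pi n)"
proof (rule linear_on_pullback[OF _ _ linear_on_antilex_le_id[OF assms(1)]])
  have pi: "pi ` {..<n} = {..<n}" using assms(2) unfolding bij_betw_def by simp
  show inj: "inj_on (reindex pi n) (pow_carrier A n)"
  proof (rule inj_onI)
    fix x y assume "x \<in> pow_carrier A n" "y \<in> pow_carrier A n" "reindex pi n x = reindex pi n y"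
    then show "x = y"
      using reindex_eq_imp_eq[where f=pi and n=n and xs=x and ys=y] pi unfolding pow_carrier_def by simp
  qed
  show "reindex pi n ` pow_carrier A n \<subseteq> pow_carrier A n"
  proof (rule image_subsetI)
    fix x assume "x \<in> pow_carrier A n"
    then have "x ! pi j \<in> fst A" if "j < n" for j
      using pi that nth_in_pow_carrier by blast
    then show "reindex pi n x \<in> pow_carrier A n" unfolding pow_carrier_def reindex_def by auto
  qed
  show "antilex_le lt pi n x y \<longleftrightarrow> antilex_le lt id n (reindex pi n x) (reindex pi n y)"
    if "x \<in> pow_carrier A n" "y \<in> pow_carrier A n" for x y
    using inj_onD[OF inj _ that] unfolding antilex_le_def antilex_less_reindex[of lt pi] by auto
qed

section \<open>Embeddings between powers of a primal algebra\<close>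

lemma eval_pow_columns:
  assumes "vars t \<subseteq> {..<length ws}" "set ws \<subseteq> pow_carrier A m"
  shows "eval (pow_ops A m) ((!) ws) t = map (\<lambda>r. eval (snd A) ((!) (map (\<lambda>w. w ! r) ws)) t) [0..<m]"
proof -
  have "length (ws ! j) = m" if "j \<in> vars t" for j
    using assms that nth_mem unfolding pow_carrier_def by blast
  then have "eval (pow_ops A m) ((!) ws) t = map (\<lambda>r. eval (snd A) (\<lambda>j. ws ! j ! r) t) [0..<m]"
    by (rule eval_pow)
  also have "\<dots> = map (\<lambda>r. eval (snd A) ((!) (map (\<lambda>w. w ! r) ws)) t) [0..<m]"
    using assms(1) by (auto intro!: map_cong eval_cong)
  finally show ?thesis .
qed

lemma hom_to_primal_is_proj:
  assumes prim: "primal ar A"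
    and psi: "\<And>u. u \<in> pow_carrier A m \<Longrightarrow> psi u \<in> fst A" "hom_on ar psi (pow_alg A m) (snd A)"
  shows "\<exists>r<m. \<forall>u\<in>pow_carrier A m. psi u = u ! r"
proof (rule ccontr)
  assume no_proj: "\<not> (\<exists>r<m. \<forall>u\<in>pow_carrier A m. psi u = u ! r)"
  obtain a b0 where ab0: "a \<in> fst A" "b0 \<in> fst A" "a \<noteq> b0" using primal_two[OF prim] .
  have a_m: "replicate m a \<in> pow_carrier A m" using ab0(1) unfolding pow_carrier_def by auto
  obtain b where b: "b \<in> fst A" "b \<noteq> psi (replicate m a)" using ab0 by blast
  obtain ws where ws: "set ws = pow_carrier A m"
    using finite_list[OF pow_carrier_finite[OF primal_finite[OF prim]]] by blast
  define K where "K = length ws"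
  have K: "K \<ge> 1" using a_m ws unfolding K_def by (cases ws) auto
  define col where "col r = map (\<lambda>w. w ! r) ws" for r
  have col: "col r \<in> pow_carrier A K" if "r < m" for r
    using ws that unfolding col_def K_def pow_carrier_def by (auto intro: nth_in_pow_carrier)
  have col_psi: "map psi ws \<in> pow_carrier A K" using psi(1) ws unfolding K_def pow_carrier_def by auto
  have col_ne: "col r \<noteq> map psi ws" if "r < m" for r
  proof
    assume "col r = map psi ws"
    then have "psi u = u ! r" if "u \<in> pow_carrier A m" for u
      using that ws unfolding col_def by (auto simp: map_eq_conv)
    then show False using no_proj \<open>r < m\<close> by blast
  qed
  text \<open>The term t is b at the column of psi-values and a elsewhere. No coordinate column is
    that column, so t is constantly a in A^m, while psi commutes with t and yields b.\<close>
  define P where "P c = (if c = map psi ws then b else a)" for c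
  have "P c \<in> fst A" for c using ab0(1) b(1) unfolding P_def by simp
  then obtain t where t: "wf_trm ar t" "vars t \<subseteq> {..<K}"
    "\<And>c. c \<in> pow_carrier A K \<Longrightarrow> eval (snd A) ((!) c) t = P c"
    using primal_termE[OF prim K, of P] by blast
  have ws_m: "ws ! j \<in> pow_carrier A m" if "j \<in> vars t" for j
    using t(2) that ws nth_mem unfolding K_def by blast
  have "eval (pow_ops A m) ((!) ws) t = map (\<lambda>r. P (col r)) [0..<m]"
    using eval_pow_columns[of t ws A m] t(2,3) col ws unfolding K_def col_def by simp
  also have "\<dots> = replicate m a" using col_ne unfolding P_def by (auto intro: nth_equalityI)
  finally have "psi (eval (pow_ops A m) ((!) ws) t) = psi (replicate m a)" by simp
  moreover have "psi (eval (pow_ops A m) ((!) ws) t) = eval (snd A) (\<lambda>j. psi (ws ! j)) t"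
    using eval_hom[OF alg_pow[OF primal_alg[OF prim]] psi(2) t(1), of "(!) ws"] ws_m by simp
  moreover have "\<dots> = eval (snd A) ((!) (map psi ws)) t"
    by (rule eval_cong) (use t(2) in \<open>auto simp: K_def\<close>)
  ultimately show False using t(3) col_psi b(2) unfolding P_def by simp
qed

lemma inj_hom_pow_is_reindex:
  assumes prim: "primal ar A"
    and phi: "inj_on phi (pow_carrier A m)" "phi ` pow_carrier A m \<subseteq> pow_carrier A n"
      "hom_on ar phi (pow_alg A m) (pow_ops A n)"
  obtains \<sigma> where "\<forall>j<n. \<sigma> j < m" "{..<m} \<subseteq> \<sigma> ` {..<n}"
    "\<And>u. u \<in> pow_carrier A m \<Longrightarrow> phi u = reindex \<sigma> n u"
proof -
  have "\<exists>r<m. \<forall>u\<in>pow_carrier A m. phi u ! j = u ! r" if j: "j < n" for j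
  proof (rule hom_to_primal_is_proj[OF prim])
    show "phi u ! j \<in> fst A" if "u \<in> pow_carrier A m" for u
      using phi(2) that j by (auto intro: nth_in_pow_carrier)
    show "hom_on ar (\<lambda>u. phi u ! j) (pow_alg A m) (snd A)"
      using phi(3) j unfolding hom_on_def by (simp add: o_def)
  qed
  then have "\<forall>j. \<exists>r. j < n \<longrightarrow> r < m \<and> (\<forall>u\<in>pow_carrier A m. phi u ! j = u ! r)" by blast
  from choice[OF this] obtain \<sigma>
    where \<sigma>: "\<forall>j<n. \<sigma> j < m \<and> (\<forall>u\<in>pow_carrier A m. phi u ! j = u ! \<sigma> j)" ..
  have phi_reindex: "phi u = reindex \<sigma> n u" if u: "u \<in> pow_carrier A m" for u
  proof (rule nth_equalityI)
    show "length (phi u) = length (reindex \<sigma> n u)" using phi(2) u unfolding pow_carrier_def by auto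
  qed (use \<sigma> u phi(2) in \<open>auto simp: pow_carrier_def\<close>)
  have "r \<in> \<sigma> ` {..<n}" if r: "r < m" for r
  proof (rule ccontr)
    assume r_not_hit: "r \<notin> \<sigma> ` {..<n}"
    obtain a b where ab: "a \<in> fst A" "b \<in> fst A" "a \<noteq> b" using primal_two[OF prim] .
    define u where "u = replicate m a"
    define v where "v = (replicate m a)[r := b]"
    have uv: "u \<in> pow_carrier A m" "v \<in> pow_carrier A m"
      using ab unfolding u_def v_def pow_carrier_def by (auto dest: set_update_subset_insert[THEN subsetD])
    have "reindex \<sigma> n u = reindex \<sigma> n v"
      unfolding reindex_def
    proof (rule map_cong[OF refl])
      fix j assume "j \<in> set [0..<n]"
      then have "\<sigma> j \<noteq> r" "\<sigma> j < m" using r_not_hit \<sigma> by auto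
      then show "u ! \<sigma> j = v ! \<sigma> j" unfolding u_def v_def by simp
    qed
    then have "u = v" using phi_reindex[OF uv(1)] phi_reindex[OF uv(2)] inj_onD[OF phi(1) _ uv] by simp
    moreover have "u ! r \<noteq> v ! r" using r ab(3) unfolding u_def v_def by simp
    ultimately show False by simp
  qed
  then show ?thesis using that \<sigma> phi_reindex by blast
qed

lemma bij_betw_nth_perm:
  assumes "distinct L" "set L = {..<n}"
  shows "bij_betw ((!) L) {..<n} {..<n}"
proof -
  have "length L = n" using distinct_card[OF assms(1)] assms(2) by simp
  then show ?thesis using bij_betw_nth[OF assms(1)] assms(2) by simp
qed

lemma reindex_perm_split:
  assumes pi: "bij_betw pi {..<m} {..<m}" and \<sigma>: "\<forall>j<n. \<sigma> j < m" "{..<m} \<subseteq> \<sigma> ` {..<n}"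
  obtains L NR where "bij_betw ((!) L) {..<n} {..<n}" "length NR + m = n"
    "\<forall>u. reindex ((!) L) n (reindex \<sigma> n u) = map (\<lambda>j. u ! \<sigma> j) NR @ reindex pi m u"
proof -
  define \<rho> where "\<rho> r = (SOME j. j < n \<and> \<sigma> j = r)" for r
  have \<rho>: "\<rho> r < n" "\<sigma> (\<rho> r) = r" if "r < m" for r
    using someI_ex[of "\<lambda>j. j < n \<and> \<sigma> j = r"] \<sigma>(2) that unfolding \<rho>_def by auto
  have pi_m: "pi ` {..<m} = {..<m}" "inj_on pi {..<m}" using pi unfolding bij_betw_def by auto
  have pi_lt: "pi s < m" if "s < m" for s using pi_m(1) that by auto
  text \<open>The last m positions of L list preimages of the coordinates in the order given by pi;
    the remaining positions come first and repeat coordinates that occur later.\<close>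
  define NR where "NR = filter (\<lambda>j. j \<notin> \<rho> ` {..<m}) [0..<n]"
  define L where "L = NR @ map (\<lambda>s. \<rho> (pi s)) [0..<m]"
  have "inj_on (\<lambda>s. \<rho> (pi s)) {..<m}"
  proof (rule inj_onI)
    fix s s' assume s: "s \<in> {..<m}" "s' \<in> {..<m}" "\<rho> (pi s) = \<rho> (pi s')"
    have "pi s < m" "pi s' < m" using pi_lt s(1,2) by auto
    then have "pi s = pi s'" using \<rho>(2) s(3) by metis
    then show "s = s'" using inj_onD[OF pi_m(2)] s(1,2) by blast
  qed
  then have "distinct L" unfolding L_def NR_def using pi_lt
    by (auto simp: distinct_map atLeast0LessThan)
  moreover have "set L = {..<n}"
  proof
    show "set L \<subseteq> {..<n}" unfolding L_def NR_def using \<rho>(1) pi_lt by auto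
    have "\<rho> ` {..<m} = (\<lambda>s. \<rho> (pi s)) ` {..<m}" using pi_m(1) by (metis image_image)
    then show "{..<n} \<subseteq> set L" unfolding L_def NR_def by (auto simp: atLeast0LessThan)
  qed
  ultimately have L: "bij_betw ((!) L) {..<n} {..<n}" "length L = n"
    using bij_betw_nth_perm distinct_card[of L] by simp_all
  moreover have "length NR + m = n" using L(2) unfolding L_def by simp
  moreover have "\<forall>u. reindex ((!) L) n (reindex \<sigma> n u) = map (\<lambda>j. u ! \<sigma> j) NR @ reindex pi m u"
  proof
    fix u
    have "reindex ((!) L) n (reindex \<sigma> n u) = map ((!) (reindex \<sigma> n u)) L"
      using reindex_nth_list[of L] L(2) by simp
    also have "\<dots> = map (\<lambda>j. u ! \<sigma> j) L" using \<open>set L = {..<n}\<close> by simp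
    finally show "reindex ((!) L) n (reindex \<sigma> n u) = map (\<lambda>j. u ! \<sigma> j) NR @ reindex pi m u"
      unfolding L_def reindex_def using \<rho>(2) pi_lt by auto
  qed
  ultimately show ?thesis using that by blast
qed

lemma antilex_le_reindex_transfer:
  assumes lt: "irrefl lt" and pi: "bij_betw pi {..<m} {..<m}"
    and \<sigma>: "\<forall>j<n. \<sigma> j < m" "{..<m} \<subseteq> \<sigma> ` {..<n}"
  obtains pi' where "bij_betw pi' {..<n} {..<n}"
    "\<And>u v. length u = m \<Longrightarrow> length v = m \<Longrightarrow>
       antilex_le lt pi m u v \<longleftrightarrow> antilex_le lt pi' n (reindex \<sigma> n u) (reindex \<sigma> n v)"
proof -
  obtain L NR where L: "bij_betw ((!) L) {..<n} {..<n}" and len_NR: "length NR + m = n"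
    and split: "\<forall>u :: 'a list. reindex ((!) L) n (reindex \<sigma> n u) = map (\<lambda>j. u ! \<sigma> j) NR @ reindex pi m u"
    using reindex_perm_split[OF pi \<sigma>] .
  have "antilex_le lt pi m u v \<longleftrightarrow> antilex_le lt ((!) L) n (reindex \<sigma> n u) (reindex \<sigma> n v)"
    if uv: "length u = m" "length v = m" for u v
  proof -
    have pi_inj: "reindex pi m u = reindex pi m v \<Longrightarrow> u = v"
      using reindex_eq_imp_eq[where f=pi and n=m and xs=u and ys=v] pi uv unfolding bij_betw_def by simp
    have \<sigma>_inj: "reindex \<sigma> n u = reindex \<sigma> n v \<longleftrightarrow> u = v"
      using reindex_eq_imp_eq[where f=\<sigma> and n=n and xs=u and ys=v] \<sigma>(2) uv by auto
    have "antilex_less lt ((!) L) n (reindex \<sigma> n u) (reindex \<sigma> n v) \<longleftrightarrow>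
        antilex_less lt id n (map (\<lambda>j. u ! \<sigma> j) NR @ reindex pi m u)
          (map (\<lambda>j. v ! \<sigma> j) NR @ reindex pi m v)"
      unfolding antilex_less_reindex[of lt "(!) L" n] split[rule_format] ..
    also have "\<dots> \<longleftrightarrow> antilex_less lt id m (reindex pi m u) (reindex pi m v) \<or>
        (reindex pi m u = reindex pi m v \<and>
          antilex_less lt id (length NR) (map (\<lambda>j. u ! \<sigma> j) NR) (map (\<lambda>j. v ! \<sigma> j) NR))"
      unfolding len_NR[symmetric] by (rule antilex_less_append) simp_all
    also have "\<dots> \<longleftrightarrow> antilex_less lt pi m u v"
      using pi_inj antilex_less_irrefl[OF lt] antilex_less_reindex[of lt pi m u v] by auto
    finally show ?thesis unfolding antilex_le_def using \<sigma>_inj by auto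
  qed
  then show ?thesis using that L by blast
qed

section \<open>The ordered category\<close>

lemma OVfin_iff:
  "OVfin ar A lt (X, le) \<longleftrightarrow> alg ar X \<and>
    (\<exists>n pi h. bij_betw pi {..<n} {..<n} \<and> pow_iso ar A n X h \<and>
      (\<forall>x\<in>fst X. \<forall>y\<in>fst X. le x y \<longleftrightarrow> antilex_le lt pi n (h x) (h y)))"
  unfolding OVfin_def pow_iso_def hom_on_def by simp

lemma OVfin_reduct:
  assumes prim: "primal ar A" and lt: "strict_linear_order_on (fst A) lt"
    and "OVfin ar A lt (X, le)"
  shows "finite (fst X) \<and> linear_on (fst X) le \<and> Vfin ar A X"
proof -
  obtain n pi h where X: "alg ar X" and pi: "bij_betw pi {..<n} {..<n}" and h: "pow_iso ar A n X h"
    and le: "\<forall>x\<in>fst X. \<forall>y\<in>fst X. le x y \<longleftrightarrow> antilex_le lt pi n (h x) (h y)"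
    using assms(3) unfolding OVfin_iff by blast
  have "Vfin ar A X" using Vfin_if_pow_iso[OF primal_alg[OF prim] primal_finite[OF prim] X h] .
  moreover have "linear_on (fst X) le"
    by (rule linear_on_pullback[OF _ _ linear_on_antilex_le[OF lt pi]])
      (use h le in \<open>auto simp: pow_iso_def bij_betw_def\<close>)
  ultimately show ?thesis unfolding Vfin_def by blast
qed

lemma OVfin_exists:
  assumes "primal ar A" "Vfin ar A X"
  shows "\<exists>le. OVfin ar A lt (X, le)"
proof -
  obtain n h where "pow_iso ar A n X h" using Vfin_pow_isoE[OF assms] .
  moreover have "alg ar X" using assms(2) unfolding Vfin_def by blast
  ultimately have "OVfin ar A lt (X, \<lambda>x y. antilex_le lt id n (h x) (h y))"
    unfolding OVfin_iff by (intro conjI exI[of _ n] exI[of _ id] exI[of _ h]) auto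
  then show ?thesis by blast
qed

lemma pow_iso_conj_emb:
  assumes X: "alg ar X" and hX: "pow_iso ar A m X hX" and hY: "pow_iso ar A n Y hY"
    and h: "alg_emb ar h X Y"
  defines "phi \<equiv> hY \<circ> h \<circ> inv_into (fst X) hX"
  shows "inj_on phi (pow_carrier A m)" "phi ` pow_carrier A m \<subseteq> pow_carrier A n"
    "hom_on ar phi (pow_alg A m) (pow_ops A n)" "\<And>x. x \<in> fst X \<Longrightarrow> phi (hX x) = hY (h x)"
proof -
  have bX: "bij_betw hX (fst X) (pow_carrier A m)" and bY: "bij_betw hY (fst Y) (pow_carrier A n)"
    using hX hY unfolding pow_iso_def by auto
  have h': "inj_on h (fst X)" "h ` fst X \<subseteq> fst Y" "hom_on ar h X (snd Y)"
    using h unfolding alg_emb_iff by auto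
  have inv: "bij_betw (inv_into (fst X) hX) (pow_carrier A m) (fst X)" using bij_betw_inv_into[OF bX] .
  show "inj_on phi (pow_carrier A m)" unfolding phi_def
    using inv h'(1,2) bY unfolding bij_betw_def by (auto intro!: comp_inj_on inj_on_subset[OF _ h'(2)])
  show "phi ` pow_carrier A m \<subseteq> pow_carrier A n" unfolding phi_def
    using inv h'(2) bY unfolding bij_betw_def by (auto simp: image_comp[symmetric])
  have "hom_on ar (inv_into (fst X) hX) (pow_alg A m) (snd X)"
    using hom_on_inv_into[where Y="pow_alg A m", OF X] bX hX unfolding pow_iso_def by simp
  then have "hom_on ar (h \<circ> inv_into (fst X) hX) (pow_alg A m) (snd Y)"
    by (rule hom_on_comp[OF _ _ h'(3)]) (use inv in \<open>simp add: bij_betw_def\<close>)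
  then have "hom_on ar (hY \<circ> (h \<circ> inv_into (fst X) hX)) (pow_alg A m) (pow_ops A n)"
    by (rule hom_on_comp) (use inv h'(2) hY in \<open>auto simp: bij_betw_def pow_iso_def image_comp[symmetric]\<close>)
  then show "hom_on ar phi (pow_alg A m) (pow_ops A n)" unfolding phi_def by (simp add: comp_assoc)
  show "phi (hX x) = hY (h x)" if "x \<in> fst X" for x
    using bX that unfolding phi_def bij_betw_def by simp
qed

lemma OVfin_extend:
  assumes prim: "primal ar A" and lt: "strict_linear_order_on (fst A) lt"
    and Y: "Vfin ar A Y" and h: "alg_emb ar h X Y" and XO: "OVfin ar A lt (X, le)"
  shows "\<exists>le'. OVfin ar A lt (Y, le') \<and> ord_emb ar h (X, le) (Y, le')"
proof -
  obtain m pi hX where X: "alg ar X" and pi: "bij_betw pi {..<m} {..<m}" and hX: "pow_iso ar A m X hX"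
    and le: "\<forall>x\<in>fst X. \<forall>y\<in>fst X. le x y \<longleftrightarrow> antilex_le lt pi m (hX x) (hX y)"
    using XO unfolding OVfin_iff by blast
  obtain n hY where hY: "pow_iso ar A n Y hY" using Vfin_pow_isoE[OF prim Y] .
  note phi = pow_iso_conj_emb[OF X hX hY h]
  obtain \<sigma> where \<sigma>: "\<forall>j<n. \<sigma> j < m" "{..<m} \<subseteq> \<sigma> ` {..<n}"
    and phi_reindex:
      "\<And>u. u \<in> pow_carrier A m \<Longrightarrow> (hY \<circ> h \<circ> inv_into (fst X) hX) u = reindex \<sigma> n u"
    using inj_hom_pow_is_reindex[OF prim phi(1-3)] by blast
  have "irrefl lt" using lt unfolding strict_linear_order_on_def by blast
  then obtain pi' where pi': "bij_betw pi' {..<n} {..<n}"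
    and transfer: "\<And>u v. length u = m \<Longrightarrow> length v = m \<Longrightarrow>
       antilex_le lt pi m u v \<longleftrightarrow> antilex_le lt pi' n (reindex \<sigma> n u) (reindex \<sigma> n v)"
    using antilex_le_reindex_transfer[OF _ pi \<sigma>] by blast
  define le' where "le' y1 y2 = antilex_le lt pi' n (hY y1) (hY y2)" for y1 y2
  have "alg ar Y" using Y unfolding Vfin_def by blast
  then have "OVfin ar A lt (Y, le')"
    unfolding OVfin_iff le'_def using pi' hY by blast
  moreover have "le x y \<longleftrightarrow> le' (h x) (h y)" if "x \<in> fst X" "y \<in> fst X" for x y
  proof -
    have hX_m: "hX z \<in> pow_carrier A m" if "z \<in> fst X" for z
      using hX that unfolding pow_iso_def bij_betw_def by auto
    have hY_h: "hY (h z) = reindex \<sigma> n (hX z)" if "z \<in> fst X" for z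
      using phi_reindex[OF hX_m[OF that]] phi(4)[OF that] by simp
    have "le x y \<longleftrightarrow> antilex_le lt pi m (hX x) (hX y)" using le that by blast
    also have "\<dots> \<longleftrightarrow> antilex_le lt pi' n (reindex \<sigma> n (hX x)) (reindex \<sigma> n (hX y))"
      using transfer hX_m that unfolding pow_carrier_def by simp
    finally show ?thesis unfolding le'_def using hY_h that by simp
  qed
  ultimately show ?thesis unfolding ord_emb_def using h by auto
qed

theorem lemma7p4:
  fixes ar :: "'f \<Rightarrow> nat" and A :: "('a,'f) alg" and lt :: "('a \<times> 'a) set"
  assumes "primal ar A"
    and "strict_linear_order_on (fst A) lt"
  shows "order_expansion (Vfin ar A :: ('b,'f) alg \<Rightarrow> bool) (OVfin ar A lt)
       \<and> reasonable ar (Vfin ar A :: ('b,'f) alg \<Rightarrow> bool) (Vfin ar A :: ('c,'f) alg \<Rightarrow> bool)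
           (OVfin ar A lt) (OVfin ar A lt)"
  unfolding order_expansion_def reasonable_def
  using OVfin_reduct[OF assms] OVfin_exists[OF assms(1)] OVfin_extend[OF assms] by blast

end
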